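(* Let $C_0$ be any quantum circuit with gates $G_1,\dots,G_m$, let $H_1,\dots,H_m$ be unitaries (each of the same dimension as the corresponding $G_i$) drawn independently from the Haar measure, and let $C(\theta)$, $\theta\in[0,1]$, be the circuit obtained from $C_0$ by replacing each gate $G_i$ with $H_i(\theta)G_i$, where $H_i(\theta)$ is the Cayley transform of $H_i$. Let $\mathcal N$ be any fixed noise model. Then $p_0(C(\theta),\mathcal N)$ is a rational function in $\theta$ whose numerator and denominator have degree $O(m)$.
   Context: Cayley transform: for a unitary $H=\sum_j e^{i\varphi_j}|\psi_j\rangle\langle\psi_j|$ with $\varphi_j\in[-\pi,\pi]$, $H(\theta)=(\theta I+(2-\theta)H)((2-\theta)I+\theta H)^{-1}=\sum_j\frac{1+i(1-\theta)\tan(\varphi_j/2)}{1-i(1-\theta)\tan(\varphi_j/2)}|\psi_j\rangle\langle\psi_j|$, so $H(0)=H$ and $H(1)=I$. A noise model $\mathcal N$ consists of $O(m)$ noise channels placed in the circuit, each acting on a constant number of qubits, of the form $(1-\gamma)\mathcal I+\gamma\mathcal E_k$ with $\mathcal E_k$ an arbitrary CPTP map, fixed independently of the gates. For an $n$-qubit circuit $C$, $p_0(C,\mathcal N)=\mathrm{Tr}[|0^n\rangle\langle 0^n|\,\mathcal C_{\mathcal N}(|0^n\rangle\langle 0^n|)]$, where $\mathcal C_{\mathcal N}$ is the channel obtained by applying the noise model to $C$. *)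

theory Defs
  imports "Jordan_Normal_Form.Determinant" "HOL-Computational_Algebra.Polynomial"
begin

definition adjoint :: "complex mat \<Rightarrow> complex mat" where
  "adjoint A = mat (dim_col A) (dim_row A) (\<lambda>(i,j). cnj (A $$ (j,i)))"

definition unitary :: "nat \<Rightarrow> complex mat \<Rightarrow> bool" where
  "unitary d U \<longleftrightarrow> U \<in> carrier_mat d d \<and> U * adjoint U = 1\<^sub>m d \<and> adjoint U * U = 1\<^sub>m d"

definition mtrace :: "complex mat \<Rightarrow> complex" where
  "mtrace A = (\<Sum>i<dim_row A. A $$ (i,i))"

definition minv :: "complex mat \<Rightarrow> complex mat" where
  "minv A = (1 / det A) \<cdot>\<^sub>m adj_mat A"

definition cayley :: "real \<Rightarrow> complex mat \<Rightarrow> complex mat" where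
  "cayley \<theta> H = (let d = dim_row H; t = complex_of_real \<theta> in
     (t \<cdot>\<^sub>m 1\<^sub>m d + (2 - t) \<cdot>\<^sub>m H) * minv ((2 - t) \<cdot>\<^sub>m 1\<^sub>m d + t \<cdot>\<^sub>m H))"

text \<open>Qubit bookkeeping: basis index i < 2^n of n qubits; bit q of i is the value of qubit q.\<close>
definition qbit :: "nat \<Rightarrow> nat \<Rightarrow> nat" where
  "qbit i q = (i div 2 ^ q) mod 2"

text \<open>Index of the restriction of basis state i to the qubit list qs (qs!j is the j-th local qubit).\<close>
definition sub_index :: "nat list \<Rightarrow> nat \<Rightarrow> nat" where
  "sub_index qs i = (\<Sum>j<length qs. qbit i (qs ! j) * 2 ^ j)"

definition agree_outside :: "nat \<Rightarrow> nat list \<Rightarrow> nat \<Rightarrow> nat \<Rightarrow> bool" where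
  "agree_outside n qs i j \<longleftrightarrow> (\<forall>q<n. q \<notin> set qs \<longrightarrow> qbit i q = qbit j q)"

text \<open>Embedding of an operator on the qubits qs into the n-qubit space (U tensor identity).\<close>
definition embed :: "nat \<Rightarrow> nat list \<Rightarrow> complex mat \<Rightarrow> complex mat" where
  "embed n qs U = mat (2 ^ n) (2 ^ n)
     (\<lambda>(i,j). if agree_outside n qs i j then U $$ (sub_index qs i, sub_index qs j) else 0)"

definition valid_qubits :: "nat \<Rightarrow> nat list \<Rightarrow> bool" where
  "valid_qubits n qs \<longleftrightarrow> distinct qs \<and> (\<forall>q\<in>set qs. q < n)"

text \<open>A gate: a list of target qubits together with a unitary on them.\<close>
type_synonym gate = "nat list \<times> complex mat"

definition valid_gate :: "nat \<Rightarrow> gate \<Rightarrow> bool" where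
  "valid_gate n g \<longleftrightarrow> valid_qubits n (fst g) \<and> unitary (2 ^ length (fst g)) (snd g)"

text \<open>A noise channel (1-gamma) Id + gamma E, with E an arbitrary CPTP map on the qubits qs,
  given by a Kraus representation Ks (sum of K^dagger K = I).\<close>
type_synonym channel = "nat list \<times> complex mat list"

definition valid_channel :: "nat \<Rightarrow> channel \<Rightarrow> bool" where
  "valid_channel n ch \<longleftrightarrow> (let qs = fst ch; Ks = snd ch; d = 2 ^ length qs in
     valid_qubits n qs \<and> (\<forall>K\<in>set Ks. K \<in> carrier_mat d d) \<and>
     (\<forall>i<d. \<forall>j<d. (\<Sum>K\<leftarrow>Ks. (adjoint K * K) $$ (i,j)) = (if i = j then 1 else 0)))"

definition apply_channel :: "nat \<Rightarrow> real \<Rightarrow> channel \<Rightarrow> complex mat \<Rightarrow> complex mat" where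
  "apply_channel n \<gamma> ch \<rho> =
     complex_of_real (1 - \<gamma>) \<cdot>\<^sub>m \<rho> +
     complex_of_real \<gamma> \<cdot>\<^sub>m foldr (\<lambda>K acc. embed n (fst ch) K * \<rho> * adjoint (embed n (fst ch) K) + acc)
                           (snd ch) (0\<^sub>m (2 ^ n) (2 ^ n))"

definition apply_layer :: "nat \<Rightarrow> real \<Rightarrow> channel list \<Rightarrow> complex mat \<Rightarrow> complex mat" where
  "apply_layer n \<gamma> L \<rho> = fold (apply_channel n \<gamma>) L \<rho>"

definition apply_unitary :: "nat \<Rightarrow> nat list \<Rightarrow> complex mat \<Rightarrow> complex mat \<Rightarrow> complex mat" where
  "apply_unitary n qs U \<rho> = embed n qs U * \<rho> * adjoint (embed n qs U)"

text \<open>A noise model for an m-gate circuit: N ! 0 is applied before the first gate and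
  N ! (i+1) right after gate i+1 (1-based), i.e. N has length m+1.\<close>
definition valid_noise_model :: "nat \<Rightarrow> nat \<Rightarrow> real \<Rightarrow> channel list list \<Rightarrow> bool" where
  "valid_noise_model n m \<gamma> N \<longleftrightarrow> 0 \<le> \<gamma> \<and> \<gamma> \<le> 1 \<and> length N = Suc m \<and>
     (\<forall>L\<in>set N. \<forall>ch\<in>set L. valid_channel n ch)"

definition proj0 :: "nat \<Rightarrow> complex mat" where
  "proj0 n = mat (2 ^ n) (2 ^ n) (\<lambda>(i,j). if i = 0 \<and> j = 0 then 1 else 0)"

definition circuit_theta :: "gate list \<Rightarrow> complex mat list \<Rightarrow> real \<Rightarrow> gate list" where
  "circuit_theta gs Hs \<theta> = map (\<lambda>i. (fst (gs ! i), cayley \<theta> (Hs ! i) * snd (gs ! i))) [0..<length gs]"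

definition noisy_output :: "nat \<Rightarrow> gate list \<Rightarrow> real \<Rightarrow> channel list list \<Rightarrow> complex mat" where
  "noisy_output n C \<gamma> N =
     fold (\<lambda>i \<rho>. apply_layer n \<gamma> (N ! Suc i) (apply_unitary n (fst (C ! i)) (snd (C ! i)) \<rho>))
          [0..<length C] (apply_layer n \<gamma> (N ! 0) (proj0 n))"

definition p0 :: "nat \<Rightarrow> gate list \<Rightarrow> real \<Rightarrow> channel list list \<Rightarrow> complex" where
  "p0 n C \<gamma> N = mtrace (proj0 n * noisy_output n C \<gamma> N)"

end

theory Submission
  imports Defs
begin

(*
  Write the Cayley transform as H(t) = N(t) D(t)^-1 with N, D affine in t and
  D(t) = (2 - t) I + t H.  D(t) is invertible for real t: a kernel vector would give
  t H v = -(2 - t) v, and since H preserves norms this forces t = 1, where D(1) = I + H.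
  By the adjugate formula every entry of H(t) is a polynomial of degree <= d divided by
  det D(t), a polynomial of degree <= d without zeros in [0,1], where d <= 2^k is the
  gate dimension.  Conjugation rho |-> U rho U^dagger by the embedded gate multiplies
  the denominator by det D(t) and its conjugate, while the noise channels do not depend
  on t at all.  Hence the entries of the output state, and so p0, are quotients of
  polynomials of degree at most 2 * 2^k per gate.
*)

text \<open>The denominator \<open>S\<close> of \<open>ratfun S D f\<close> may have zeros in [0,1]; its nonvanishing is
  assumed separately wherever it is needed.\<close>

definition ratfun :: "complex poly \<Rightarrow> nat \<Rightarrow> (real \<Rightarrow> complex) \<Rightarrow> bool" where
  "ratfun S D f \<longleftrightarrow>
     (\<exists>p. degree p \<le> D \<and> (\<forall>\<theta>\<in>{0..1}. poly S (of_real \<theta>) * f \<theta> = poly p (of_real \<theta>)))"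

lemma ratfun_mono: "ratfun S D f \<Longrightarrow> D \<le> D' \<Longrightarrow> ratfun S D' f"
  unfolding ratfun_def by (meson order.trans)

lemma ratfun_zero: "ratfun S D (\<lambda>_. 0)"
  unfolding ratfun_def by (intro exI[of _ 0]) auto

lemma ratfun_const: "ratfun 1 0 (\<lambda>_. c)"
  unfolding ratfun_def by (intro exI[of _ "[:c:]"]) auto

lemma ratfun_linear: "ratfun 1 1 (\<lambda>\<theta>. a + b * of_real \<theta>)"
  unfolding ratfun_def by (intro exI[of _ "[:a, b:]"]) (auto simp: algebra_simps)

lemma ratfun_add: "ratfun S D f \<Longrightarrow> ratfun S D g \<Longrightarrow> ratfun S D (\<lambda>\<theta>. f \<theta> + g \<theta>)"
  unfolding ratfun_def by (metis (no_types, lifting) degree_add_le distrib_left poly_add)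

lemma ratfun_mult:
  assumes "ratfun S1 D1 f" and "ratfun S2 D2 g"
  shows "ratfun (S1 * S2) (D1 + D2) (\<lambda>\<theta>. f \<theta> * g \<theta>)"
proof -
  obtain p q where "degree p \<le> D1" "\<forall>\<theta>\<in>{0..1}. poly S1 (of_real \<theta>) * f \<theta> = poly p (of_real \<theta>)"
    "degree q \<le> D2" "\<forall>\<theta>\<in>{0..1}. poly S2 (of_real \<theta>) * g \<theta> = poly q (of_real \<theta>)"
    using assms unfolding ratfun_def by blast
  then show ?thesis
    unfolding ratfun_def
    by (intro exI[of _ "p * q"]) (auto intro: order.trans[OF degree_mult_le] simp: algebra_simps add_mono)
qed

lemma ratfun_cmult: "ratfun S D f \<Longrightarrow> ratfun S D (\<lambda>\<theta>. c * f \<theta>)"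
  using ratfun_mult[OF ratfun_const, of S D f c] by simp

lemma ratfun_sum:
  "finite I \<Longrightarrow> (\<And>i. i \<in> I \<Longrightarrow> ratfun S D (f i)) \<Longrightarrow> ratfun S D (\<lambda>\<theta>. \<Sum>i\<in>I. f i \<theta>)"
  by (induction I rule: finite_induct) (auto intro: ratfun_add ratfun_zero)

lemma ratfun_prod:
  "finite I \<Longrightarrow> (\<And>i. i \<in> I \<Longrightarrow> ratfun S D (f i)) \<Longrightarrow>
    ratfun (S ^ card I) (card I * D) (\<lambda>\<theta>. \<Prod>i\<in>I. f i \<theta>)"
proof (induction I rule: finite_induct)
  case empty
  then show ?case using ratfun_const[of 1] by simp
next
  case (insert x F)
  then have "ratfun (S * S ^ card F) (D + card F * D) (\<lambda>\<theta>. f x \<theta> * (\<Prod>i\<in>F. f i \<theta>))"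
    by (intro ratfun_mult) auto
  with insert show ?case by simp
qed

lemma poly_map_poly_cnj_of_real:
  "poly (map_poly cnj p) (of_real x) = cnj (poly p (of_real x))"
  using poly_cnj[of p "of_real x"] by simp

lemma ratfun_cnj:
  assumes "ratfun S D f"
  shows "ratfun (map_poly cnj S) D (\<lambda>\<theta>. cnj (f \<theta>))"
proof -
  obtain p where "degree p \<le> D" "\<forall>\<theta>\<in>{0..1}. poly S (of_real \<theta>) * f \<theta> = poly p (of_real \<theta>)"
    using assms unfolding ratfun_def by blast
  then show ?thesis
    unfolding ratfun_def using map_poly_degree_leq[of cnj p]
    by (intro exI[of _ "map_poly cnj p"]) (auto simp: poly_map_poly_cnj_of_real simp flip: complex_cnj_mult)
qed

lemma ratfun_inverse:
  assumes "\<And>\<theta>. \<theta> \<in> {0..1} \<Longrightarrow> f \<theta> = poly p (of_real \<theta>)" and "\<And>\<theta>. \<theta> \<in> {0..1} \<Longrightarrow> f \<theta> \<noteq> 0"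
  shows "ratfun p 0 (\<lambda>\<theta>. 1 / f \<theta>)"
  unfolding ratfun_def using assms by (intro exI[of _ "[:1:]"]) auto

lemma ratfun_quotient:
  assumes "ratfun Q D f" and "\<And>\<theta>. \<theta> \<in> {0..1} \<Longrightarrow> poly Q (of_real \<theta>) \<noteq> 0"
  shows "\<exists>P. degree P \<le> D \<and> (\<forall>\<theta>\<in>{0..1}. f \<theta> = poly P (of_real \<theta>) / poly Q (of_real \<theta>))"
  using assms unfolding ratfun_def by (metis nonzero_mult_div_cancel_left)

lemma degree_prod_mult_cnj_le:
  assumes "finite I" and "\<And>i. i \<in> I \<Longrightarrow> degree (\<Delta> i) \<le> R"
  shows "degree (\<Prod>i\<in>I. \<Delta> i * map_poly cnj (\<Delta> i)) \<le> 2 * R * card I"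
proof -
  have "degree (\<Prod>i\<in>I. \<Delta> i * map_poly cnj (\<Delta> i)) \<le> (\<Sum>i\<in>I. degree (\<Delta> i * map_poly cnj (\<Delta> i)))"
    using degree_prod_sum_le[OF assms(1)] by (simp add: o_def)
  also have "\<dots> \<le> (\<Sum>i\<in>I. 2 * R)"
  proof (rule sum_mono)
    fix i assume "i \<in> I"
    then have "degree (\<Delta> i) \<le> R" by (rule assms(2))
    then show "degree (\<Delta> i * map_poly cnj (\<Delta> i)) \<le> 2 * R"
      using degree_mult_le[of "\<Delta> i" "map_poly cnj (\<Delta> i)"] map_poly_degree_leq[of cnj "\<Delta> i"]
      by linarith
  qed
  finally show ?thesis by (simp add: mult.commute)
qed

definition ratfun_mat :: "complex poly \<Rightarrow> nat \<Rightarrow> nat \<Rightarrow> (real \<Rightarrow> complex mat) \<Rightarrow> bool" where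
  "ratfun_mat S D r A \<longleftrightarrow>
     (\<forall>\<theta>. A \<theta> \<in> carrier_mat r r) \<and> (\<forall>i<r. \<forall>j<r. ratfun S D (\<lambda>\<theta>. A \<theta> $$ (i, j)))"

lemma ratfun_matI:
  "(\<And>\<theta>. A \<theta> \<in> carrier_mat r r) \<Longrightarrow> (\<And>i j. i < r \<Longrightarrow> j < r \<Longrightarrow> ratfun S D (\<lambda>\<theta>. A \<theta> $$ (i, j)))
    \<Longrightarrow> ratfun_mat S D r A"
  unfolding ratfun_mat_def by blast

lemma ratfun_mat_carrier: "ratfun_mat S D r A \<Longrightarrow> A \<theta> \<in> carrier_mat r r"
  unfolding ratfun_mat_def by blast

lemma ratfun_mat_dim: "ratfun_mat S D r A \<Longrightarrow> dim_row (A \<theta>) = r \<and> dim_col (A \<theta>) = r"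
  unfolding ratfun_mat_def by blast

lemma ratfun_mat_entry: "ratfun_mat S D r A \<Longrightarrow> i < r \<Longrightarrow> j < r \<Longrightarrow> ratfun S D (\<lambda>\<theta>. A \<theta> $$ (i, j))"
  unfolding ratfun_mat_def by blast

lemma ratfun_mat_mono: "ratfun_mat S D r A \<Longrightarrow> D \<le> D' \<Longrightarrow> ratfun_mat S D' r A"
  unfolding ratfun_mat_def using ratfun_mono by blast

lemma ratfun_mat_const: "A \<in> carrier_mat r r \<Longrightarrow> ratfun_mat 1 0 r (\<lambda>_. A)"
  unfolding ratfun_mat_def using ratfun_const by blast

lemma ratfun_mat_zero: "ratfun_mat S D r (\<lambda>_. 0\<^sub>m r r)"
  unfolding ratfun_mat_def using ratfun_zero by auto

lemma ratfun_mat_add: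
  assumes A: "ratfun_mat S D r A" and B: "ratfun_mat S D r B"
  shows "ratfun_mat S D r (\<lambda>\<theta>. A \<theta> + B \<theta>)"
proof (rule ratfun_matI)
  fix i j assume ij: "i < r" "j < r"
  then have "(\<lambda>\<theta>. (A \<theta> + B \<theta>) $$ (i, j)) = (\<lambda>\<theta>. A \<theta> $$ (i, j) + B \<theta> $$ (i, j))"
    using ratfun_mat_dim[OF A] ratfun_mat_dim[OF B] by auto
  then show "ratfun S D (\<lambda>\<theta>. (A \<theta> + B \<theta>) $$ (i, j))"
    using ij by (simp add: ratfun_add ratfun_mat_entry[OF A] ratfun_mat_entry[OF B])
qed (use ratfun_mat_carrier[OF A] ratfun_mat_carrier[OF B] in auto)

lemma ratfun_mat_smult:
  assumes c: "ratfun S1 D1 c" and A: "ratfun_mat S2 D2 r A"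
  shows "ratfun_mat (S1 * S2) (D1 + D2) r (\<lambda>\<theta>. c \<theta> \<cdot>\<^sub>m A \<theta>)"
proof (rule ratfun_matI)
  fix i j assume ij: "i < r" "j < r"
  then have "(\<lambda>\<theta>. (c \<theta> \<cdot>\<^sub>m A \<theta>) $$ (i, j)) = (\<lambda>\<theta>. c \<theta> * A \<theta> $$ (i, j))"
    using ratfun_mat_dim[OF A] by auto
  then show "ratfun (S1 * S2) (D1 + D2) (\<lambda>\<theta>. (c \<theta> \<cdot>\<^sub>m A \<theta>) $$ (i, j))"
    using ij by (simp add: ratfun_mult[OF c] ratfun_mat_entry[OF A])
qed (use ratfun_mat_carrier[OF A] in auto)

lemma ratfun_mat_mult:
  assumes A: "ratfun_mat S1 D1 r A" and B: "ratfun_mat S2 D2 r B"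
  shows "ratfun_mat (S1 * S2) (D1 + D2) r (\<lambda>\<theta>. A \<theta> * B \<theta>)"
proof (rule ratfun_matI)
  fix i j assume ij: "i < r" "j < r"
  then have "(\<lambda>\<theta>. (A \<theta> * B \<theta>) $$ (i, j)) = (\<lambda>\<theta>. \<Sum>k\<in>{0..<r}. A \<theta> $$ (i, k) * B \<theta> $$ (k, j))"
    using ratfun_mat_dim[OF A] ratfun_mat_dim[OF B] by (auto simp: scalar_prod_def)
  then show "ratfun (S1 * S2) (D1 + D2) (\<lambda>\<theta>. (A \<theta> * B \<theta>) $$ (i, j))"
    using ij by (auto intro!: ratfun_sum ratfun_mult ratfun_mat_entry[OF A] ratfun_mat_entry[OF B])
qed (rule mult_carrier_mat[OF ratfun_mat_carrier[OF A] ratfun_mat_carrier[OF B]])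

lemma ratfun_mat_adjoint:
  assumes A: "ratfun_mat S D r A"
  shows "ratfun_mat (map_poly cnj S) D r (\<lambda>\<theta>. adjoint (A \<theta>))"
proof (rule ratfun_matI)
  fix i j assume ij: "i < r" "j < r"
  then have "(\<lambda>\<theta>. adjoint (A \<theta>) $$ (i, j)) = (\<lambda>\<theta>. cnj (A \<theta> $$ (j, i)))"
    using ratfun_mat_dim[OF A] by (auto simp: adjoint_def)
  then show "ratfun (map_poly cnj S) D (\<lambda>\<theta>. adjoint (A \<theta>) $$ (i, j))"
    using ij by (simp add: ratfun_cnj ratfun_mat_entry[OF A])
qed (use ratfun_mat_dim[OF A] in \<open>simp add: adjoint_def\<close>)

lemma ratfun_mat_delete:
  assumes A: "ratfun_mat S D r A" and "k < r" "l < r"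
  shows "ratfun_mat S D (r - 1) (\<lambda>\<theta>. mat_delete (A \<theta>) k l)"
proof (rule ratfun_matI)
  fix i j assume ij: "i < r - 1" "j < r - 1"
  then have "(\<lambda>\<theta>. mat_delete (A \<theta>) k l $$ (i, j))
      = (\<lambda>\<theta>. A \<theta> $$ (if i < k then i else Suc i, if j < l then j else Suc j))"
    using ratfun_mat_dim[OF A] by (auto simp: mat_delete_def)
  then show "ratfun S D (\<lambda>\<theta>. mat_delete (A \<theta>) k l $$ (i, j))"
    using ij by (simp add: ratfun_mat_entry[OF A])
qed (rule mat_delete_carrier[OF ratfun_mat_carrier[OF A]])

lemma ratfun_det:
  assumes A: "ratfun_mat S D r A"
  shows "ratfun (S ^ r) (r * D) (\<lambda>\<theta>. det (A \<theta>))"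
proof -
  have "ratfun (S ^ r) (r * D)
      (\<lambda>\<theta>. \<Sum>p\<in>{p. p permutes {0..<r}}. signof p * (\<Prod>i = 0..<r. A \<theta> $$ (i, p i)))"
  proof (intro ratfun_sum ratfun_cmult)
    fix p assume "p \<in> {p. p permutes {0..<r}}"
    then have "i < r \<Longrightarrow> p i < r" for i
      using permutes_in_image by fastforce
    then show "ratfun (S ^ r) (r * D) (\<lambda>\<theta>. \<Prod>i = 0..<r. A \<theta> $$ (i, p i))"
      using ratfun_prod[of "{0..<r}" S D "\<lambda>i \<theta>. A \<theta> $$ (i, p i)"] ratfun_mat_entry[OF A] by simp
  qed (simp add: finite_permutations)
  moreover have "det (A \<theta>)
      = (\<Sum>p\<in>{p. p permutes {0..<r}}. signof p * (\<Prod>i = 0..<r. A \<theta> $$ (i, p i)))" for \<theta>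
    using ratfun_mat_dim[OF A] unfolding det_def by auto
  ultimately show ?thesis by simp
qed

lemma ratfun_mat_adj_mat:
  assumes A: "ratfun_mat S D r A"
  shows "ratfun_mat (S ^ (r - 1)) ((r - 1) * D) r (\<lambda>\<theta>. adj_mat (A \<theta>))"
proof (rule ratfun_matI)
  fix i j assume ij: "i < r" "j < r"
  have "ratfun (S ^ (r - 1)) ((r - 1) * D) (\<lambda>\<theta>. (-1) ^ (j + i) * det (mat_delete (A \<theta>) j i))"
    using ij by (intro ratfun_cmult ratfun_det ratfun_mat_delete[OF A])
  moreover have "adj_mat (A \<theta>) $$ (i, j) = (-1) ^ (j + i) * det (mat_delete (A \<theta>) j i)" for \<theta>
    using ratfun_mat_dim[OF A] ij by (simp add: adj_mat_def cofactor_def)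
  ultimately show "ratfun (S ^ (r - 1)) ((r - 1) * D) (\<lambda>\<theta>. adj_mat (A \<theta>) $$ (i, j))"
    by simp
qed (rule adj_mat(1)[OF ratfun_mat_carrier[OF A]])

lemma ratfun_mtrace:
  assumes A: "ratfun_mat S D r A"
  shows "ratfun S D (\<lambda>\<theta>. mtrace (A \<theta>))"
proof -
  have "(\<lambda>\<theta>. mtrace (A \<theta>)) = (\<lambda>\<theta>. \<Sum>i<r. A \<theta> $$ (i, i))"
    using ratfun_mat_dim[OF A] by (auto simp: mtrace_def)
  then show ?thesis by (auto intro!: ratfun_sum ratfun_mat_entry[OF A])
qed

lemma smult_mult_mat_vec:
  fixes A :: "'a :: comm_ring mat"
  assumes "A \<in> carrier_mat nr nc" "v \<in> carrier_vec nc"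
  shows "(k \<cdot>\<^sub>m A) *\<^sub>v v = k \<cdot>\<^sub>v (A *\<^sub>v v)"
  using assms by (intro eq_vecI) (auto simp: scalar_prod_def sum_distrib_left mult.assoc)

lemma adjoint_cscalar_prod:
  assumes A: "A \<in> carrier_mat nr nc" and x: "x \<in> carrier_vec nc" and y: "y \<in> carrier_vec nr"
  shows "(A *\<^sub>v x) \<bullet>c y = x \<bullet>c (adjoint A *\<^sub>v y)"
proof -
  have "(A *\<^sub>v x) \<bullet>c y = (\<Sum>i<nr. \<Sum>k<nc. A $$ (i, k) * x $ k * cnj (y $ i))"
    using A x y by (auto simp: scalar_prod_def sum_distrib_right lessThan_atLeast0)
  also have "\<dots> = (\<Sum>k<nc. \<Sum>i<nr. A $$ (i, k) * x $ k * cnj (y $ i))"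
    by (rule sum.swap)
  also have "\<dots> = x \<bullet>c (adjoint A *\<^sub>v y)"
    using A x y by (auto simp: scalar_prod_def adjoint_def sum_distrib_left lessThan_atLeast0 mult_ac)
  finally show ?thesis .
qed

lemma unitary_cscalar_prod:
  assumes H: "unitary r H" and v: "v \<in> carrier_vec r"
  shows "(H *\<^sub>v v) \<bullet>c (H *\<^sub>v v) = v \<bullet>c v"
proof -
  have Hc: "H \<in> carrier_mat r r" and "adjoint H * H = 1\<^sub>m r"
    using H by (auto simp: unitary_def)
  moreover have "adjoint H \<in> carrier_mat r r"
    using Hc by (simp add: adjoint_def)
  ultimately show ?thesis
    using v by (simp add: adjoint_cscalar_prod[OF Hc] flip: assoc_mult_mat_vec)
qed

lemma unitary_scaling_cmod_eq:
  assumes H: "unitary r H" and v: "v \<in> carrier_vec r" "v \<noteq> 0\<^sub>v r"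
    and eq: "a \<cdot>\<^sub>v (H *\<^sub>v v) = b \<cdot>\<^sub>v v"
  shows "cmod a = cmod b"
proof -
  have Hc: "H \<in> carrier_mat r r" using H by (simp add: unitary_def)
  have "a * cnj a * (v \<bullet>c v) = (a \<cdot>\<^sub>v (H *\<^sub>v v)) \<bullet>c (a \<cdot>\<^sub>v (H *\<^sub>v v))"
    using Hc v(1) by (simp add: conjugate_smult_vec unitary_cscalar_prod[OF H])
  also have "\<dots> = b * cnj b * (v \<bullet>c v)"
    using v(1) by (simp add: eq conjugate_smult_vec)
  finally have "a * cnj a = b * cnj b"
    using v by simp
  then have "complex_of_real (cmod a ^ 2) = complex_of_real (cmod b ^ 2)"
    by (simp only: complex_norm_square)
  then show ?thesis
    using power2_eq_imp_eq[OF _ norm_ge_zero norm_ge_zero] of_real_eq_iff by blast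
qed

lemma cayley_denominator_det_nonzero:
  assumes H: "unitary r H" and det1: "det (1\<^sub>m r + H) \<noteq> 0"
  shows "det ((2 - of_real \<theta>) \<cdot>\<^sub>m 1\<^sub>m r + of_real \<theta> \<cdot>\<^sub>m H) \<noteq> 0"
proof
  define t :: complex where "t = of_real \<theta>"
  define M where "M = (2 - t) \<cdot>\<^sub>m 1\<^sub>m r + t \<cdot>\<^sub>m H"
  have Hc: "H \<in> carrier_mat r r" using H by (simp add: unitary_def)
  then have Mc: "M \<in> carrier_mat r r" by (simp add: M_def)
  assume "det ((2 - of_real \<theta>) \<cdot>\<^sub>m 1\<^sub>m r + of_real \<theta> \<cdot>\<^sub>m H) = 0"
  then obtain v where v: "v \<in> carrier_vec r" "v \<noteq> 0\<^sub>v r" "M *\<^sub>v v = 0\<^sub>v r"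
    using det_0_iff_vec_prod_zero[OF Mc] by (auto simp: M_def t_def)
  have "\<theta> \<noteq> 1"
  proof
    assume "\<theta> = 1"
    then have "M = 1\<^sub>m r + H" using Hc by (auto simp: M_def t_def)
    with det1 v show False using det_0_iff_vec_prod_zero[OF Mc] by auto
  qed
  have "(2 - t) \<cdot>\<^sub>v v + t \<cdot>\<^sub>v (H *\<^sub>v v) = M *\<^sub>v v"
    using Hc v(1) by (simp add: M_def add_mult_distrib_mat_vec[of _ r r] smult_mult_mat_vec[of _ r r])
  then have sum0: "(2 - t) \<cdot>\<^sub>v v + t \<cdot>\<^sub>v (H *\<^sub>v v) = 0\<^sub>v r" using v(3) by simp
  have "t \<cdot>\<^sub>v (H *\<^sub>v v) = (t - 2) \<cdot>\<^sub>v v"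
  proof (rule eq_vecI)
    fix i assume "i < dim_vec ((t - 2) \<cdot>\<^sub>v v)"
    then have "i < r" using v(1) by simp
    moreover from this have "((2 - t) \<cdot>\<^sub>v v + t \<cdot>\<^sub>v (H *\<^sub>v v)) $ i = 0"
      by (simp add: sum0)
    ultimately show "(t \<cdot>\<^sub>v (H *\<^sub>v v)) $ i = ((t - 2) \<cdot>\<^sub>v v) $ i"
      using Hc v(1) by (simp add: add_eq_0_iff algebra_simps)
  qed (use Hc v(1) in simp)
  then have "cmod t = cmod (t - 2)"
    using unitary_scaling_cmod_eq[OF H v(1,2)] by blast
  moreover have "t - 2 = of_real (\<theta> - 2)" by (simp add: t_def)
  ultimately have "\<bar>\<theta>\<bar> = \<bar>\<theta> - 2\<bar>"
    by (simp only: t_def norm_of_real)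
  with \<open>\<theta> \<noteq> 1\<close> show False by linarith
qed

lemma ratfun_mat_linear:
  assumes "X \<in> carrier_mat r r" and "Y \<in> carrier_mat r r"
  shows "ratfun_mat 1 1 r (\<lambda>\<theta>. (a + b * of_real \<theta>) \<cdot>\<^sub>m X + (c + d * of_real \<theta>) \<cdot>\<^sub>m Y)"
  using ratfun_mat_add[OF ratfun_mat_smult[OF ratfun_linear ratfun_mat_const[OF assms(1)]]
      ratfun_mat_smult[OF ratfun_linear ratfun_mat_const[OF assms(2)]]]
  by simp

lemma ratfun_mat_cayley_mult:
  assumes G: "G \<in> carrier_mat r r" and H: "unitary r H" and det1: "det (1\<^sub>m r + H) \<noteq> 0"
    and r: "0 < r"
  shows "\<exists>\<Delta>. degree \<Delta> \<le> r \<and> (\<forall>\<theta>\<in>{0..1}. poly \<Delta> (of_real \<theta>) \<noteq> 0) \<and>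
    ratfun_mat \<Delta> r r (\<lambda>\<theta>. cayley \<theta> H * G)"
proof -
  have Hc: "H \<in> carrier_mat r r" using H by (simp add: unitary_def)
  define Num where "Num = (\<lambda>\<theta>. of_real \<theta> \<cdot>\<^sub>m 1\<^sub>m r + (2 - of_real \<theta>) \<cdot>\<^sub>m H)"
  define Den where "Den = (\<lambda>\<theta>. (2 - of_real \<theta>) \<cdot>\<^sub>m 1\<^sub>m r + of_real \<theta> \<cdot>\<^sub>m H)"
  have Num: "ratfun_mat 1 1 r Num"
    using ratfun_mat_linear[OF one_carrier_mat Hc, of 0 1 2 "-1"] by (simp add: Num_def)
  have Den: "ratfun_mat 1 1 r Den"
    using ratfun_mat_linear[OF one_carrier_mat Hc, of 2 "-1" 0 1] by (simp add: Den_def)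
  obtain p where p: "degree p \<le> r" "\<And>\<theta>. \<theta> \<in> {0..1} \<Longrightarrow> det (Den \<theta>) = poly p (of_real \<theta>)"
    using ratfun_det[OF Den] unfolding ratfun_def by auto
  have det_nz: "det (Den \<theta>) \<noteq> 0" for \<theta>
    unfolding Den_def by (rule cayley_denominator_det_nonzero[OF H det1])
  have "ratfun p 0 (\<lambda>\<theta>. 1 / det (Den \<theta>))"
    using p(2) det_nz by (rule ratfun_inverse)
  from ratfun_mat_smult[OF this ratfun_mat_adj_mat[OF Den]]
  have "ratfun_mat p (r - 1) r (\<lambda>\<theta>. minv (Den \<theta>))"
    by (simp add: minv_def)
  from ratfun_mat_mult[OF ratfun_mat_mult[OF Num this] ratfun_mat_const[OF G]]
  have "ratfun_mat p r r (\<lambda>\<theta>. Num \<theta> * minv (Den \<theta>) * G)"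
    using r by simp
  moreover have "cayley \<theta> H = Num \<theta> * minv (Den \<theta>)" for \<theta>
    using Hc by (simp add: cayley_def Let_def Num_def Den_def)
  moreover have "poly p (of_real \<theta>) \<noteq> 0" if "\<theta> \<in> {0..1}" for \<theta>
    using det_nz p(2)[OF that] by metis
  ultimately show ?thesis
    using p(1) by (intro exI[of _ p]) simp
qed

lemma sub_index_less: "sub_index qs i < 2 ^ length qs"
proof -
  have "sub_index qs i \<le> (\<Sum>j<length qs. 2 ^ j)"
    unfolding sub_index_def by (intro sum_mono) (simp add: qbit_def)
  also have "\<dots> = 2 ^ length qs - 1"
    using sum_power2 by (simp add: lessThan_atLeast0)
  moreover have "(0::nat) < 2 ^ length qs" by simp
  ultimately show ?thesis by linarith
qed

lemma ratfun_mat_embed: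
  assumes U: "ratfun_mat S D (2 ^ length qs) U"
  shows "ratfun_mat S D (2 ^ n) (\<lambda>\<theta>. embed n qs (U \<theta>))"
proof (rule ratfun_matI)
  fix i j :: nat assume "i < 2 ^ n" "j < 2 ^ n"
  then have "(\<lambda>\<theta>. embed n qs (U \<theta>) $$ (i, j)) = (if agree_outside n qs i j
      then (\<lambda>\<theta>. U \<theta> $$ (sub_index qs i, sub_index qs j)) else (\<lambda>_. 0))"
    by (auto simp: embed_def)
  then show "ratfun S D (\<lambda>\<theta>. embed n qs (U \<theta>) $$ (i, j))"
    by (simp add: ratfun_zero ratfun_mat_entry[OF U] sub_index_less)
qed (simp add: embed_def)

lemma ratfun_mat_apply_unitary:
  assumes "ratfun_mat \<Delta> R (2 ^ length qs) U" and "ratfun_mat S D (2 ^ n) \<rho>"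
  shows "ratfun_mat (\<Delta> * S * map_poly cnj \<Delta>) (R + D + R) (2 ^ n) (\<lambda>\<theta>. apply_unitary n qs (U \<theta>) (\<rho> \<theta>))"
  unfolding apply_unitary_def
  by (intro ratfun_mat_mult ratfun_mat_adjoint ratfun_mat_embed assms)

lemma ratfun_mat_apply_channel:
  assumes ch: "valid_channel n ch" and \<rho>: "ratfun_mat S D (2 ^ n) \<rho>"
  shows "ratfun_mat S D (2 ^ n) (\<lambda>\<theta>. apply_channel n \<gamma> ch (\<rho> \<theta>))"
proof -
  let ?E = "embed n (fst ch)"
  have "ratfun_mat S D (2 ^ n) (\<lambda>\<theta>. foldr (\<lambda>K acc. ?E K * \<rho> \<theta> * adjoint (?E K) + acc) Ks (0\<^sub>m (2 ^ n) (2 ^ n)))"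
    if "\<forall>K\<in>set Ks. K \<in> carrier_mat (2 ^ length (fst ch)) (2 ^ length (fst ch))" for Ks
    using that
  proof (induction Ks)
    case Nil
    show ?case by (simp add: ratfun_mat_zero)
  next
    case (Cons K Ks)
    then have E: "ratfun_mat 1 0 (2 ^ n) (\<lambda>_. ?E K)"
      by (intro ratfun_mat_embed ratfun_mat_const) simp
    have "ratfun_mat (1 * S * map_poly cnj 1) (0 + D + 0) (2 ^ n) (\<lambda>\<theta>. ?E K * \<rho> \<theta> * adjoint (?E K))"
      by (intro ratfun_mat_mult ratfun_mat_adjoint E \<rho>)
    with Cons show ?case by (simp add: ratfun_mat_add)
  qed
  then have "ratfun_mat S D (2 ^ n)
      (\<lambda>\<theta>. foldr (\<lambda>K acc. ?E K * \<rho> \<theta> * adjoint (?E K) + acc) (snd ch) (0\<^sub>m (2 ^ n) (2 ^ n)))"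
    using ch by (simp add: valid_channel_def Let_def)
  from ratfun_mat_add[OF ratfun_mat_smult[OF ratfun_const \<rho>] ratfun_mat_smult[OF ratfun_const this]]
  show ?thesis by (simp add: apply_channel_def)
qed

lemma ratfun_mat_apply_layer:
  "\<forall>ch\<in>set L. valid_channel n ch \<Longrightarrow> ratfun_mat S D (2 ^ n) \<rho> \<Longrightarrow>
    ratfun_mat S D (2 ^ n) (\<lambda>\<theta>. apply_layer n \<gamma> L (\<rho> \<theta>))"
proof (induction L arbitrary: \<rho>)
  case Nil
  then show ?case by (simp add: apply_layer_def)
next
  case (Cons ch L)
  then have "ratfun_mat S D (2 ^ n) (\<lambda>\<theta>. apply_layer n \<gamma> L (apply_channel n \<gamma> ch (\<rho> \<theta>)))"
    by (simp add: ratfun_mat_apply_channel)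
  then show ?case by (simp add: apply_layer_def)
qed

lemma ratfun_mat_fold_layers:
  assumes U: "\<And>i. i < m \<Longrightarrow> ratfun_mat (\<Delta> i) R (2 ^ length (qs i)) (U i)"
    and L: "\<And>i. i < m \<Longrightarrow> \<forall>ch\<in>set (L i). valid_channel n ch"
    and \<rho>: "ratfun_mat S D (2 ^ n) \<rho>"
  shows "ratfun_mat (S * (\<Prod>i<m. \<Delta> i * map_poly cnj (\<Delta> i))) (D + 2 * R * m) (2 ^ n)
     (\<lambda>\<theta>. fold (\<lambda>i \<sigma>. apply_layer n \<gamma> (L i) (apply_unitary n (qs i) (U i \<theta>) \<sigma>)) [0..<m] (\<rho> \<theta>))"
  using U L
proof (induction m)
  case 0
  then show ?case using \<rho> by simp
next
  case (Suc m)
  have "ratfun_mat (S * (\<Prod>i<m. \<Delta> i * map_poly cnj (\<Delta> i))) (D + 2 * R * m) (2 ^ n)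
     (\<lambda>\<theta>. fold (\<lambda>i \<sigma>. apply_layer n \<gamma> (L i) (apply_unitary n (qs i) (U i \<theta>) \<sigma>)) [0..<m] (\<rho> \<theta>))"
    by (rule Suc.IH; meson Suc.prems less_SucI)
  then have "ratfun_mat (\<Delta> m * (S * (\<Prod>i<m. \<Delta> i * map_poly cnj (\<Delta> i))) * map_poly cnj (\<Delta> m))
      (R + (D + 2 * R * m) + R) (2 ^ n)
      (\<lambda>\<theta>. apply_layer n \<gamma> (L m) (apply_unitary n (qs m) (U m \<theta>)
        (fold (\<lambda>i \<sigma>. apply_layer n \<gamma> (L i) (apply_unitary n (qs i) (U i \<theta>) \<sigma>)) [0..<m] (\<rho> \<theta>))))"
    by (intro ratfun_mat_apply_layer ratfun_mat_apply_unitary) (simp_all add: Suc.prems(1) Suc.prems(2)[of m])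
  then show ?case by (simp add: algebra_simps)
qed

lemma ratfun_p0:
  assumes U: "\<And>i. i < m \<Longrightarrow> ratfun_mat (\<Delta> i) R (2 ^ length (qs i)) (U i)"
    and N: "valid_noise_model n m \<gamma> N"
  shows "ratfun (\<Prod>i<m. \<Delta> i * map_poly cnj (\<Delta> i)) (2 * R * m)
    (\<lambda>\<theta>. p0 n (map (\<lambda>i. (qs i, U i \<theta>)) [0..<m]) \<gamma> N)"
proof -
  have layers: "\<forall>ch\<in>set (N ! i). valid_channel n ch" if "i \<le> m" for i
    using N that unfolding valid_noise_model_def by (metis le_imp_less_Suc nth_mem)
  have proj0: "proj0 n \<in> carrier_mat (2 ^ n) (2 ^ n)"
    by (simp add: proj0_def)
  let ?step = "\<lambda>\<theta> i \<sigma>. apply_layer n \<gamma> (N ! Suc i) (apply_unitary n (qs i) (U i \<theta>) \<sigma>)"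
  have "ratfun_mat 1 0 (2 ^ n) (\<lambda>_. apply_layer n \<gamma> (N ! 0) (proj0 n))"
    using layers[of 0] by (intro ratfun_mat_apply_layer ratfun_mat_const proj0) simp
  then have "ratfun_mat (1 * (\<Prod>i<m. \<Delta> i * map_poly cnj (\<Delta> i))) (0 + 2 * R * m) (2 ^ n)
      (\<lambda>\<theta>. fold (?step \<theta>) [0..<m] (apply_layer n \<gamma> (N ! 0) (proj0 n)))"
    by (rule ratfun_mat_fold_layers[rotated 2]) (blast intro: U, meson layers Suc_leI)
  moreover have "fold (?step \<theta>) [0..<m] (apply_layer n \<gamma> (N ! 0) (proj0 n))
      = noisy_output n (map (\<lambda>i. (qs i, U i \<theta>)) [0..<m]) \<gamma> N" for \<theta>
    unfolding noisy_output_def by (intro fold_cong) auto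
  ultimately have "ratfun_mat (\<Prod>i<m. \<Delta> i * map_poly cnj (\<Delta> i)) (2 * R * m) (2 ^ n)
      (\<lambda>\<theta>. noisy_output n (map (\<lambda>i. (qs i, U i \<theta>)) [0..<m]) \<gamma> N)"
    by simp
  from ratfun_mtrace[OF ratfun_mat_mult[OF ratfun_mat_const[OF proj0] this]]
  show ?thesis by (simp add: p0_def)
qed

lemma ratfun_p0_circuit_theta:
  assumes gates: "\<forall>g\<in>set gs. valid_gate n g \<and> length (fst g) \<le> k"
    and Hs: "\<forall>i<length gs. unitary (2 ^ length (fst (gs ! i))) (Hs ! i) \<and>
                   det (1\<^sub>m (2 ^ length (fst (gs ! i))) + Hs ! i) \<noteq> 0"
    and N: "valid_noise_model n (length gs) \<gamma> N"
  shows "\<exists>Q. degree Q \<le> 2 * 2 ^ k * length gs \<and> (\<forall>\<theta>\<in>{0..1}. poly Q (of_real \<theta>) \<noteq> 0) \<and>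
    ratfun Q (2 * 2 ^ k * length gs) (\<lambda>\<theta>. p0 n (circuit_theta gs Hs \<theta>) \<gamma> N)"
proof -
  let ?m = "length gs" and ?R = "2 ^ k :: nat"
  have "\<exists>\<Delta>. degree \<Delta> \<le> ?R \<and> (\<forall>\<theta>\<in>{0..1}. poly \<Delta> (of_real \<theta>) \<noteq> 0) \<and>
      ratfun_mat \<Delta> ?R (2 ^ length (fst (gs ! i))) (\<lambda>\<theta>. cayley \<theta> (Hs ! i) * snd (gs ! i))"
    if i: "i < ?m" for i
  proof -
    have "valid_gate n (gs ! i)" and len: "length (fst (gs ! i)) \<le> k"
      using gates i by auto
    then have "snd (gs ! i) \<in> carrier_mat (2 ^ length (fst (gs ! i))) (2 ^ length (fst (gs ! i)))"
      by (simp add: valid_gate_def unitary_def)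
    moreover have "(2::nat) ^ length (fst (gs ! i)) \<le> ?R"
      using len by (simp add: power_increasing)
    ultimately show ?thesis
      using ratfun_mat_cayley_mult Hs i by (meson order.trans ratfun_mat_mono zero_less_power pos2)
  qed
  then obtain \<Delta> where \<Delta>: "\<And>i. i < ?m \<Longrightarrow> degree (\<Delta> i) \<le> ?R \<and> (\<forall>\<theta>\<in>{0..1}. poly (\<Delta> i) (of_real \<theta>) \<noteq> 0) \<and>
      ratfun_mat (\<Delta> i) ?R (2 ^ length (fst (gs ! i))) (\<lambda>\<theta>. cayley \<theta> (Hs ! i) * snd (gs ! i))"
    by metis
  define Q where "Q = (\<Prod>i<?m. \<Delta> i * map_poly cnj (\<Delta> i))"
  have "ratfun Q (2 * ?R * ?m) (\<lambda>\<theta>. p0 n (circuit_theta gs Hs \<theta>) \<gamma> N)"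
    unfolding Q_def circuit_theta_def using \<Delta> N by (intro ratfun_p0) auto
  moreover have "degree Q \<le> 2 * ?R * ?m"
    unfolding Q_def using degree_prod_mult_cnj_le[of "{..<?m}" \<Delta> ?R] \<Delta> by simp
  moreover have "\<forall>\<theta>\<in>{0..1}. poly Q (of_real \<theta>) \<noteq> 0"
    using \<Delta> by (auto simp: Q_def poly_prod poly_map_poly_cnj_of_real)
  ultimately show ?thesis by blast
qed

theorem lemma3:
  fixes k :: nat
  shows "\<exists>c::nat. \<forall>(n::nat) (gs::gate list) (Hs::complex mat list) (\<gamma>::real) (N::channel list list).
    (\<forall>g\<in>set gs. valid_gate n g \<and> length (fst g) \<le> k) \<and>
    length Hs = length gs \<and>
    (\<forall>i<length gs. unitary (2 ^ length (fst (gs ! i))) (Hs ! i) \<and>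
                   det (1\<^sub>m (2 ^ length (fst (gs ! i))) + Hs ! i) \<noteq> 0) \<and>
    valid_noise_model n (length gs) \<gamma> N
    \<longrightarrow> (\<exists>P Q :: complex poly.
          degree P \<le> c * length gs \<and> degree Q \<le> c * length gs \<and>
          (\<forall>\<theta>\<in>{0..1::real}. poly Q (complex_of_real \<theta>) \<noteq> 0 \<and>
             p0 n (circuit_theta gs Hs \<theta>) \<gamma> N
               = poly P (complex_of_real \<theta>) / poly Q (complex_of_real \<theta>)))"
proof (intro exI[of _ "2 * 2 ^ k :: nat"] allI impI, elim conjE, goal_cases)
  case (1 n gs Hs \<gamma> N)
  then obtain Q where Q: "degree Q \<le> 2 * 2 ^ k * length gs" "\<forall>\<theta>\<in>{0..1}. poly Q (of_real \<theta>) \<noteq> 0"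
    "ratfun Q (2 * 2 ^ k * length gs) (\<lambda>\<theta>. p0 n (circuit_theta gs Hs \<theta>) \<gamma> N)"
    by (blast dest: ratfun_p0_circuit_theta)
  then obtain P where "degree P \<le> 2 * 2 ^ k * length gs"
    "\<forall>\<theta>\<in>{0..1}. p0 n (circuit_theta gs Hs \<theta>) \<gamma> N = poly P (of_real \<theta>) / poly Q (of_real \<theta>)"
    using ratfun_quotient by blast
  with Q show ?case by blast
qed

end
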